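(* Let $\Gamma$ be a weakly distance-regular digraph and let $q\ge3$ be an integer with $(1,q-1),(2,q-2)\in\tilde\partial(\Gamma)$. If $p_{(1,q-1),(1,q-1)}^{(2,q-2)}>0$, then every arc of type $(1,q-1)$ is contained in a circuit of length $q$ all of whose arcs are of type $(1,q-1)$.
   Context: Digraphs are finite and simple. $\partial(x,y)$ is the length of a shortest directed path from $x$ to $y$; $\tilde\partial(x,y)=(\partial(x,y),\partial(y,x))$; $\tilde\partial(\Gamma)$ is the set of all values $\tilde\partial(x,y)$; $\Gamma_{\tilde i}=\{(x,y):\tilde\partial(x,y)=\tilde i\}$. A strongly connected digraph $\Gamma$ is weakly distance-regular if $(V\Gamma,\{\Gamma_{\tilde i}\})$ is an association scheme, i.e. for all $\tilde i,\tilde j,\tilde l$ the number $p_{\tilde i,\tilde j}^{\tilde l}=|\{z:\tilde\partial(x,z)=\tilde i,\ \tilde\partial(z,y)=\tilde j\}|$ depends only on $\tilde l=\tilde\partial(x,y)$. An arc $(u,v)$ is of type $(1,r)$ if $\partial(v,u)=r$. A circuit of length $q$ is a closed directed path $(x_0,x_1,\dots,x_{q-1})$ with distinct vertices and arcs $(x_i,x_{i+1})$, indices mod $q$. *)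

theory Defs
  imports Main
begin

text \<open>A finite simple digraph: finite vertex set V, arc set A \<subseteq> V \<times> V, no loops
  (no parallel arcs is automatic for a relation).\<close>
definition digraph :: "'a set \<Rightarrow> ('a \<times> 'a) set \<Rightarrow> bool" where
  "digraph V A \<longleftrightarrow> finite V \<and> A \<subseteq> V \<times> V \<and> (\<forall>x. (x, x) \<notin> A)"

definition strongly_connected :: "'a set \<Rightarrow> ('a \<times> 'a) set \<Rightarrow> bool" where
  "strongly_connected V A \<longleftrightarrow> (\<forall>x\<in>V. \<forall>y\<in>V. (x, y) \<in> A\<^sup>*)"

definition dist :: "('a \<times> 'a) set \<Rightarrow> 'a \<Rightarrow> 'a \<Rightarrow> nat" where
  "dist A x y = (LEAST n. (x, y) \<in> A ^^ n)"

definition tdist :: "('a \<times> 'a) set \<Rightarrow> 'a \<Rightarrow> 'a \<Rightarrow> nat \<times> nat" where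
  "tdist A x y = (dist A x y, dist A y x)"

definition tdist_set :: "'a set \<Rightarrow> ('a \<times> 'a) set \<Rightarrow> (nat \<times> nat) set" where
  "tdist_set V A = {tdist A x y | x y. x \<in> V \<and> y \<in> V}"

definition pnum :: "'a set \<Rightarrow> ('a \<times> 'a) set \<Rightarrow> nat \<times> nat \<Rightarrow> nat \<times> nat \<Rightarrow> 'a \<Rightarrow> 'a \<Rightarrow> nat" where
  "pnum V A i j x y = card {z \<in> V. tdist A x z = i \<and> tdist A z y = j}"

text \<open>Weakly distance-regular: the distance partition is an association scheme, i.e.
  the numbers pnum depend only on tdist(x,y). (The remaining association-scheme
  axioms -- diagonal class, closure under transposition, partition -- hold automatically
  for the partition by two-way distance.)\<close>
definition weakly_distance_regular :: "'a set \<Rightarrow> ('a \<times> 'a) set \<Rightarrow> bool" where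
  "weakly_distance_regular V A \<longleftrightarrow> digraph V A \<and> strongly_connected V A \<and>
     (\<forall>i j x y x' y'. x \<in> V \<longrightarrow> y \<in> V \<longrightarrow> x' \<in> V \<longrightarrow> y' \<in> V \<longrightarrow>
        tdist A x y = tdist A x' y' \<longrightarrow> pnum V A i j x y = pnum V A i j x' y')"

text \<open>Intersection number p_{i,j}^l (well defined for weakly distance-regular digraphs
  and l in tdist_set).\<close>
definition pint :: "'a set \<Rightarrow> ('a \<times> 'a) set \<Rightarrow> nat \<times> nat \<Rightarrow> nat \<times> nat \<Rightarrow> nat \<times> nat \<Rightarrow> nat" where
  "pint V A i j l = (let (x, y) = (SOME (x, y). x \<in> V \<and> y \<in> V \<and> tdist A x y = l)
                      in pnum V A i j x y)"

definition arc_of_type :: "('a \<times> 'a) set \<Rightarrow> nat \<Rightarrow> 'a \<Rightarrow> 'a \<Rightarrow> bool" where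
  "arc_of_type A r u v \<longleftrightarrow> (u, v) \<in> A \<and> dist A v u = r"

definition circuit :: "('a \<times> 'a) set \<Rightarrow> 'a list \<Rightarrow> bool" where
  "circuit A xs \<longleftrightarrow> xs \<noteq> [] \<and> distinct xs \<and>
     (\<forall>i < length xs. (xs ! i, xs ! (Suc i mod length xs)) \<in> A)"

end

theory Submission
  imports Defs
begin

text \<open>Let (u,v) be an arc of type (1,q-1). Since p^{(2,q-2)}_{(1,q-1),(1,q-1)} > 0, also
  p^{(1,q-1)}_{(2,q-2),(q-1,1)} > 0, so there is w with tdist(u,w) = (2,q-2) and
  tdist(w,v) = (q-1,1); together with a shortest path from w back to u this closes
  (u,v,w) into a closed walk of length q whose first two arcs are of type (1,q-1).
  As dist(v,u) = q-1, the walk from v back to u is a geodesic; hence if the first k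
  arcs (2 \<le> k < q) are of type (1,q-1), the vertices x_{k-1}, x_{k+1} are at two-way
  distance (2,q-2), and the middle vertex x_k can be replaced by one that makes both
  arcs at position k-1 and k of type (1,q-1). After q-2 replacements all arcs have type
  (1,q-1), and the geodesic property forces the vertices of the walk to be distinct.\<close>

lemma dist_le: "(x, y) \<in> A ^^ n \<Longrightarrow> dist A x y \<le> n"
  unfolding dist_def by (rule Least_le)

lemma relpow_dist: "(x, y) \<in> A\<^sup>* \<Longrightarrow> (x, y) \<in> A ^^ dist A x y"
  unfolding dist_def by (metis LeastI_ex rtrancl_power)

lemma dist_self [simp]: "dist A x x = 0"
  using dist_le[where A=A and x=x and y=x and n=0] by simp

lemma dist_triangle:
  assumes "(x, y) \<in> A\<^sup>*" "(y, z) \<in> A\<^sup>*"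
  shows "dist A x z \<le> dist A x y + dist A y z"
  using relpow_dist[OF assms(1)] relpow_dist[OF assms(2)]
  by (intro dist_le) (auto simp: relpow_add)

lemma dist_eq_1_imp_arc: "(x, y) \<in> A\<^sup>* \<Longrightarrow> dist A x y = 1 \<Longrightarrow> (x, y) \<in> A"
  using relpow_dist[of x y A] by simp

lemma arc_imp_dist_eq_1: "(x, y) \<in> A \<Longrightarrow> x \<noteq> y \<Longrightarrow> dist A x y = 1"
  using dist_le[where A=A and x=x and y=y and n=1] relpow_dist[where A=A and x=x and y=y]
  by (cases "dist A x y") auto

lemma tdist_swap: "tdist A x y = (m, n) \<Longrightarrow> tdist A y x = (n, m)"
  by (simp add: tdist_def)

lemma arc_of_type_imp_tdist:
  "digraph V A \<Longrightarrow> arc_of_type A r u v \<Longrightarrow> tdist A u v = (1, r)"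
  by (metis arc_imp_dist_eq_1 arc_of_type_def digraph_def tdist_def)

lemma tdist_imp_arc_of_type:
  assumes "strongly_connected V A" "u \<in> V" "v \<in> V" "tdist A u v = (1, r)"
  shows "arc_of_type A r u v"
  using assms dist_eq_1_imp_arc[of u v A]
  by (auto simp: strongly_connected_def arc_of_type_def tdist_def)

lemma pnum_pos_iff:
  "finite V \<Longrightarrow> 0 < pnum V A i j x y \<longleftrightarrow> (\<exists>z\<in>V. tdist A x z = i \<and> tdist A z y = j)"
  by (auto simp: pnum_def card_gt_0_iff)

lemma pint_eq_pnum:
  assumes wdr: "weakly_distance_regular V A" and "x \<in> V" "y \<in> V"
  shows "pint V A i j (tdist A x y) = pnum V A i j x y"
proof -
  define P where "P = (\<lambda>(x', y'). x' \<in> V \<and> y' \<in> V \<and> tdist A x' y' = tdist A x y)"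
  obtain x' y' where some: "(SOME p. P p) = (x', y')" by fastforce
  have "P (x, y)" using assms by (simp add: P_def)
  then have "P (x', y')" using someI[of P "(x, y)"] some by simp
  then have "pnum V A i j x' y' = pnum V A i j x y"
    using wdr assms(2,3) unfolding P_def weakly_distance_regular_def by blast
  then show ?thesis using some by (simp add: pint_def P_def)
qed

lemma pint_pos_iff:
  assumes "weakly_distance_regular V A" "x \<in> V" "y \<in> V"
  shows "0 < pint V A i j (tdist A x y) \<longleftrightarrow> (\<exists>z\<in>V. tdist A x z = i \<and> tdist A z y = j)"
  using assms pint_eq_pnum pnum_pos_iff
  by (metis digraph_def weakly_distance_regular_def)

lemma arcs_of_type_if_pint_pos:
  assumes wdr: "weakly_distance_regular V A" and pos: "0 < pint V A (1, r) (1, r) l"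
    and ab: "a \<in> V" "b \<in> V" "tdist A a b = l"
  shows "\<exists>c. arc_of_type A r a c \<and> arc_of_type A r c b"
proof -
  have conn: "strongly_connected V A" using wdr by (simp add: weakly_distance_regular_def)
  obtain c where "c \<in> V" "tdist A a c = (1, r)" "tdist A c b = (1, r)"
    using pint_pos_iff[OF wdr ab(1,2)] pos ab(3) by auto
  then show ?thesis using tdist_imp_arc_of_type[OF conn] ab(1,2) by blast
qed

lemma arc_of_type_completion:
  assumes wdr: "weakly_distance_regular V A" and l: "l \<in> tdist_set V A"
    and pos: "0 < pint V A (1, r) (1, r) l" and uv: "arc_of_type A r u v"
  obtains w where "w \<in> V" "tdist A u w = l" "tdist A w v = (r, 1)"
proof -
  have G: "digraph V A" using wdr by (simp add: weakly_distance_regular_def)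
  obtain x y where xy: "x \<in> V" "y \<in> V" "tdist A x y = l"
    using l by (auto simp: tdist_set_def)
  then obtain z where xz: "arc_of_type A r x z" and zy: "arc_of_type A r z y"
    using arcs_of_type_if_pint_pos[OF wdr pos] by blast
  have V: "z \<in> V" "u \<in> V" "v \<in> V"
    using xz uv G by (auto simp: arc_of_type_def digraph_def)
  have "0 < pint V A l (r, 1) (tdist A x z)"
    using pint_pos_iff[OF wdr xy(1) V(1)] xy tdist_swap[OF arc_of_type_imp_tdist[OF G zy]]
    by auto
  then show thesis
    using that pint_pos_iff[OF wdr V(2,3)]
      arc_of_type_imp_tdist[OF G xz] arc_of_type_imp_tdist[OF G uv] by auto
qed

definition closed_walk :: "('a \<times> 'a) set \<Rightarrow> nat \<Rightarrow> (nat \<Rightarrow> 'a) \<Rightarrow> bool" where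
  "closed_walk A q f \<longleftrightarrow> f q = f 0 \<and> (\<forall>i<q. (f i, f (Suc i)) \<in> A)"

lemma walk_relpow:
  assumes "\<forall>l<n. (f l, f (Suc l)) \<in> A" "i \<le> j" "j \<le> n"
  shows "(f i, f j) \<in> A ^^ (j - i)"
  unfolding relpow_fun_conv using assms by (intro exI[of _ "\<lambda>l. f (i + l)"]) auto

lemma closed_walk_relpow:
  assumes "closed_walk A q f" "i \<le> j" "j \<le> q"
  shows "(f i, f j) \<in> A ^^ (j - i)"
  using assms walk_relpow by (auto simp: closed_walk_def)

lemma closed_walk_relpow_around:
  assumes "closed_walk A q f" "j \<le> i" "i \<le> q"
  shows "(f i, f j) \<in> A ^^ (q - i + j)"
proof -
  have "(f i, f q) \<in> A ^^ (q - i)" "(f 0, f j) \<in> A ^^ (j - 0)"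
    using closed_walk_relpow[OF assms(1), of i q] closed_walk_relpow[OF assms(1), of 0 j] assms(2,3)
    by simp_all
  then show ?thesis using assms(1) by (auto simp: closed_walk_def relpow_add)
qed

lemma closed_walk_geodesic:
  assumes walk: "closed_walk A q f" and tight: "dist A (f 1) (f 0) = q - 1"
    and ij: "1 \<le> i" "i \<le> j" "j \<le> q"
  shows "dist A (f i) (f j) = j - i"
proof -
  have le: "dist A (f a) (f b) \<le> b - a" if "a \<le> b" "b \<le> q" for a b
    using closed_walk_relpow[OF walk that] by (rule dist_le)
  have reach: "(f a, f b) \<in> A\<^sup>*" if "a \<le> b" "b \<le> q" for a b
    using closed_walk_relpow[OF walk that] by (rule relpow_imp_rtrancl)
  have "q - 1 = dist A (f 1) (f q)"
    using tight walk by (simp add: closed_walk_def)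
  also have "\<dots> \<le> dist A (f 1) (f i) + dist A (f i) (f j) + dist A (f j) (f q)"
    using dist_triangle[OF reach[of 1 i] reach[of i q]]
      dist_triangle[OF reach[of i j] reach[of j q]] ij by simp
  also have "\<dots> \<le> (i - 1) + dist A (f i) (f j) + (q - j)"
    using le[of 1 i] le[of j q] ij by simp
  finally show ?thesis using le[of i j] ij by simp
qed

lemma closed_walk_inj_on:
  assumes walk: "closed_walk A q f" and tight: "dist A (f 1) (f 0) = q - 1"
  shows "inj_on f {..<q}"
proof -
  have "f a \<noteq> f b" if ab: "a < b" "b < q" for a b
  proof (cases "a = 0")
    case True
    have "dist A (f b) (f q) = q - b" using closed_walk_geodesic[OF walk tight] ab by simp
    then show ?thesis using True ab walk by (auto simp: closed_walk_def)
  next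
    case False
    have "dist A (f a) (f b) = b - a" using closed_walk_geodesic[OF walk tight] ab False by simp
    then show ?thesis using ab by auto
  qed
  then show ?thesis by (metis inj_onI lessThan_iff linorder_neqE_nat)
qed

lemma closed_walk_nth_Suc_mod:
  assumes "closed_walk A q f" "i < q"
  shows "map f [0..<q] ! (Suc i mod q) = f (Suc i)"
  using assms by (cases "Suc i = q") (auto simp: closed_walk_def)

lemma circuit_of_closed_walk:
  assumes walk: "closed_walk A q f"
    and typed: "\<forall>i<q. arc_of_type A (q - 1) (f i) (f (Suc i))" and q: "0 < q"
  shows "\<exists>xs. circuit A xs \<and> length xs = q \<and>
           (\<exists>i < q. xs ! i = f 0 \<and> xs ! (Suc i mod q) = f 1) \<and>
           (\<forall>i < q. arc_of_type A (q - 1) (xs ! i) (xs ! (Suc i mod q)))"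
proof -
  have tight: "dist A (f 1) (f 0) = q - 1"
    using typed q by (auto simp: arc_of_type_def)
  define xs where "xs = map f [0..<q]"
  have nth: "xs ! i = f i" "xs ! (Suc i mod q) = f (Suc i)" if "i < q" for i
    using that closed_walk_nth_Suc_mod[OF walk] by (simp_all add: xs_def)
  have "circuit A xs"
    using walk closed_walk_inj_on[OF walk tight] q nth
    by (auto simp: circuit_def closed_walk_def xs_def distinct_map lessThan_atLeast0)
  moreover have "\<exists>i < q. xs ! i = f 0 \<and> xs ! (Suc i mod q) = f 1"
    using nth[of 0] q by (intro exI[of _ 0]) simp
  ultimately show ?thesis
    using nth typed by (intro exI[of _ xs]) (simp add: xs_def)
qed

lemma closed_walk_from_arcs_and_path:
  assumes "(u, v) \<in> A" "(v, w) \<in> A" "(w, u) \<in> A ^^ (q - 2)" "2 \<le> q"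
  obtains f where "closed_walk A q f" "f 0 = u" "f 1 = v" "f 2 = w"
proof -
  obtain h where h: "h 0 = w" "h (q - 2) = u" "\<forall>i<q - 2. (h i, h (Suc i)) \<in> A"
    using assms(3) unfolding relpow_fun_conv by blast
  define f where "f i = (case i of 0 \<Rightarrow> u | Suc 0 \<Rightarrow> v | Suc (Suc j) \<Rightarrow> h j)" for i
  obtain m where q: "q = Suc (Suc m)"
    using assms(4) by (metis add_2_eq_Suc le_Suc_ex)
  have "f q = u" using h(2) q by (simp add: f_def)
  moreover have "(f i, f (Suc i)) \<in> A" if "i < q" for i
    using that assms h q by (auto simp: f_def split: nat.split)
  ultimately have "closed_walk A q f" by (simp add: closed_walk_def f_def)
  then show thesis using that h(1) by (simp add: f_def numeral_2_eq_2)
qed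

lemma closed_walk_through_arc_of_type:
  assumes G: "digraph V A" and conn: "strongly_connected V A"
    and uv: "arc_of_type A (q - 1) u v"
    and w: "w \<in> V" "tdist A u w = (2, q - 2)" "tdist A w v = (q - 1, 1)" and q: "2 \<le> q"
  obtains f where "closed_walk A q f" "f 0 = u" "f 1 = v"
    "\<forall>i<2. arc_of_type A (q - 1) (f i) (f (Suc i))"
proof -
  have uvA: "(u, v) \<in> A" using uv by (simp add: arc_of_type_def)
  then have V: "u \<in> V" "v \<in> V" using G by (auto simp: digraph_def)
  have vw: "arc_of_type A (q - 1) v w"
    using tdist_imp_arc_of_type[OF conn V(2) w(1) tdist_swap[OF w(3)]] .
  then have vwA: "(v, w) \<in> A" by (simp add: arc_of_type_def)
  have "(w, u) \<in> A\<^sup>*" using conn w(1) V(1) by (simp add: strongly_connected_def)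
  then have wu: "(w, u) \<in> A ^^ (q - 2)"
    using relpow_dist w(2) by (fastforce simp: tdist_def)
  obtain f where f: "closed_walk A q f" "f 0 = u" "f 1 = v" "f 2 = w"
    by (rule closed_walk_from_arcs_and_path[OF uvA vwA wu q])
  have "\<forall>i<2. arc_of_type A (q - 1) (f i) (f (Suc i))"
    using f uv vw by (simp add: less_2_cases_iff) (simp add: numeral_2_eq_2)
  then show thesis using that f by blast
qed

text \<open>f (k - 1) and f (k + 1) lie on the geodesic f 1, ..., f q, so they are at distance 2;
  going around the walk back from f (k + 1) takes q - 2 steps, which is optimal because the
  arc (f (k - 1), f k) has type (1,q-1).\<close>

lemma closed_walk_replace_vertex:
  assumes sub: "A \<subseteq> V \<times> V"
    and split: "\<And>a b. a \<in> V \<Longrightarrow> b \<in> V \<Longrightarrow> tdist A a b = (2, q - 2) \<Longrightarrow>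
                  \<exists>c. arc_of_type A (q - 1) a c \<and> arc_of_type A (q - 1) c b"
    and walk: "closed_walk A q f"
    and typed: "\<forall>i<k. arc_of_type A (q - 1) (f i) (f (Suc i))"
    and k: "2 \<le> k" "k < q"
  obtains c where "closed_walk A q (f(k := c))"
    "\<forall>i<Suc k. arc_of_type A (q - 1) ((f(k := c)) i) ((f(k := c)) (Suc i))"
proof -
  have tight: "dist A (f 1) (f 0) = q - 1"
    using typed k by (auto simp: arc_of_type_def)
  have around: "(f (Suc k), f (k - 1)) \<in> A ^^ (q - 2)"
    using closed_walk_relpow_around[OF walk, of "k - 1" "Suc k"] k
    by (simp add: numeral_2_eq_2)
  have "q - 1 = dist A (f k) (f (k - 1))"
    using typed k by (auto simp: arc_of_type_def dest: spec[of _ "k - 1"])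
  also have "\<dots> \<le> dist A (f k) (f (Suc k)) + dist A (f (Suc k)) (f (k - 1))"
    using walk k around by (intro dist_triangle) (auto simp: closed_walk_def relpow_imp_rtrancl)
  also have "dist A (f k) (f (Suc k)) \<le> 1"
    using walk k by (intro dist_le) (simp add: closed_walk_def)
  finally have "dist A (f (Suc k)) (f (k - 1)) = q - 2"
    using dist_le[OF around] by simp
  moreover have "dist A (f (k - 1)) (f (Suc k)) = 2"
    using closed_walk_geodesic[OF walk tight, of "k - 1" "Suc k"] k by simp
  moreover have "(f (k - 1), f k) \<in> A" "(f k, f (Suc k)) \<in> A"
    using typed walk k by (auto simp: arc_of_type_def closed_walk_def dest: spec[of _ "k - 1"])
  then have "f (k - 1) \<in> V" "f (Suc k) \<in> V"
    using sub by auto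
  ultimately obtain c where c: "arc_of_type A (q - 1) (f (k - 1)) c"
      "arc_of_type A (q - 1) c (f (Suc k))"
    using split by (metis tdist_def)
  show thesis
  proof
    have "((f(k := c)) i, (f(k := c)) (Suc i)) \<in> A" if "i < q" for i
      using that walk c k by (cases "Suc i = k") (auto simp: closed_walk_def arc_of_type_def)
    then show "closed_walk A q (f(k := c))"
      using walk k by (simp add: closed_walk_def)
    show "\<forall>i<Suc k. arc_of_type A (q - 1) ((f(k := c)) i) ((f(k := c)) (Suc i))"
      using typed c k by (auto simp: less_Suc_eq)
  qed
qed

lemma closed_walk_all_arcs_of_type:
  assumes sub: "A \<subseteq> V \<times> V"
    and split: "\<And>a b. a \<in> V \<Longrightarrow> b \<in> V \<Longrightarrow> tdist A a b = (2, q - 2) \<Longrightarrow>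
                  \<exists>c. arc_of_type A (q - 1) a c \<and> arc_of_type A (q - 1) c b"
    and walk: "closed_walk A q f"
    and typed: "\<forall>i<2. arc_of_type A (q - 1) (f i) (f (Suc i))"
    and q: "2 \<le> q"
  obtains g where "closed_walk A q g" "g 0 = f 0" "g 1 = f 1"
    "\<forall>i<q. arc_of_type A (q - 1) (g i) (g (Suc i))"
proof -
  have "\<exists>g. closed_walk A q g \<and> g 0 = f 0 \<and> g 1 = f 1 \<and>
            (\<forall>i<k. arc_of_type A (q - 1) (g i) (g (Suc i)))" if "2 \<le> k" "k \<le> q" for k
    using that
  proof (induction k rule: dec_induct)
    case base
    show ?case using walk typed by (intro exI[of _ f]) simp
  next
    case (step k)
    then obtain g where g: "closed_walk A q g" "g 0 = f 0" "g 1 = f 1"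
        "\<forall>i<k. arc_of_type A (q - 1) (g i) (g (Suc i))"
      by (meson Suc_leD)
    have k: "2 \<le> k" "k < q" using step(1,4) by simp_all
    obtain c where "closed_walk A q (g(k := c))"
        "\<forall>i<Suc k. arc_of_type A (q - 1) ((g(k := c)) i) ((g(k := c)) (Suc i))"
      using closed_walk_replace_vertex[OF sub split g(1) g(4) k] by blast
    moreover have "(g(k := c)) 0 = f 0" "(g(k := c)) 1 = f 1" using g(2,3) k(1) by simp_all
    ultimately show ?case by blast
  qed
  then show thesis using that q by blast
qed

theorem lemma2p6:
  fixes V :: "'a set" and A :: "('a \<times> 'a) set" and q :: nat
  assumes "weakly_distance_regular V A"
    and "q \<ge> 3"
    and "(1, q - 1) \<in> tdist_set V A"
    and "(2, q - 2) \<in> tdist_set V A"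
    and "pint V A (1, q - 1) (1, q - 1) (2, q - 2) > 0"
  shows "\<forall>u v. arc_of_type A (q - 1) u v \<longrightarrow>
           (\<exists>xs. circuit A xs \<and> length xs = q \<and>
                 (\<exists>i < q. xs ! i = u \<and> xs ! (Suc i mod q) = v) \<and>
                 (\<forall>i < q. arc_of_type A (q - 1) (xs ! i) (xs ! (Suc i mod q))))"
proof (intro allI impI)
  fix u v assume uv: "arc_of_type A (q - 1) u v"
  have G: "digraph V A" and conn: "strongly_connected V A"
    using assms(1) by (simp_all add: weakly_distance_regular_def)
  have sub: "A \<subseteq> V \<times> V" using G by (simp add: digraph_def)
  have q: "2 \<le> q" using assms(2) by simp
  note split = arcs_of_type_if_pint_pos[OF assms(1) assms(5)]
  obtain w where w: "w \<in> V" "tdist A u w = (2, q - 2)" "tdist A w v = (q - 1, 1)"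
    by (rule arc_of_type_completion[OF assms(1) assms(4) assms(5) uv])
  obtain f0 where f0: "closed_walk A q f0" "f0 0 = u" "f0 1 = v"
      "\<forall>i<2. arc_of_type A (q - 1) (f0 i) (f0 (Suc i))"
    by (rule closed_walk_through_arc_of_type[OF G conn uv w q])
  obtain f where f: "closed_walk A q f" "f 0 = f0 0" "f 1 = f0 1"
      "\<forall>i<q. arc_of_type A (q - 1) (f i) (f (Suc i))"
    by (rule closed_walk_all_arcs_of_type[OF sub split f0(1) f0(4) q])
  show "\<exists>xs. circuit A xs \<and> length xs = q \<and>
                 (\<exists>i < q. xs ! i = u \<and> xs ! (Suc i mod q) = v) \<and>
                 (\<forall>i < q. arc_of_type A (q - 1) (xs ! i) (xs ! (Suc i mod q)))"
    using circuit_of_closed_walk[OF f(1) f(4)] f(2,3) f0(2,3) q by simp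
qed

end
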